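(* Let $G=(V,E)$ be a finite simple connected graph, $t\ge 0$ an integer, $r\ge 0$ an integer, and $\Phi\subseteq\Phi^{(t)}_{\mathrm{all}}$ a set of failure patterns. Then consensus in $G$ can be solved by an oblivious algorithm running in $r$ rounds under the $t$-resilient model with failure patterns in $\Phi$ (i.e. for every input assignment and every failure pattern in $\Phi$) if and only if every connected component of the information flow graph $\mathsf{IF}(G,r,\Phi)$ has a dominating node in $V$.
   Context: Model. $G=(V,E)$ is a finite simple connected undirected graph whose nodes carry distinct identifiers; $N(v)$ is the neighbourhood of $v$. Computation proceeds in synchronous rounds; in each round every node sends a message to each neighbour, receives its neighbours' messages, and computes. Nodes know $G$ and $t$. Failure patterns. A failure pattern is a set $\varphi=\{(v,F_v,f_v): v\in F\}$ with $F\subseteq V$, $|F|\le t$, and for each $v\in F$ an integer $f_v\ge1$ and a nonempty $F_v\subseteq N(v)$: $v$ acts normally in rounds $1,\dots,f_v-1$, in round $f_v$ its messages reach exactly $N(v)\setminus F_v$, and afterwards it sends nothing. Nodes in $F$ are faulty, the others correct. $\Phi^{(t)}_{\mathrm{all}}$ denotes the set of all failure patterns with at most $t$ faulty nodes. Causal paths. A causal path w.r.t. $\varphi$ from $v$ to $v'$ is a sequence $u_1=v,\dots,u_q=v'$ with $u_{i+1}\in N(u_i)$, such that for each $i<q$, $u_i$ has not crashed during rounds $1,\dots,i-1$, and if $(u_i,F_{u_i},i)\in\varphi$ then $u_{i+1}\notin F_{u_i}$; its length is $q-1$. Views. Each node $u$ has input $x_u$; in flooding every node sends $(u,x_u)$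 in round 1 and forwards all known pairs in later rounds. $\mathrm{view}(v,r,\varphi)$ is the set of pairs $(u,x_u)$ known to $v$ after $r$ rounds under $\varphi$; $(u,x_u)\in\mathrm{view}(v,r,\varphi)$ iff $u=v$ or some causal path w.r.t. $\varphi$ from $u$ to $v$ has length at most $r$. Views are identified through the set of nodes $u$ whose pair they contain (this set depends only on $G,\varphi,r$), so the graph below does not depend on inputs. Oblivious algorithms and consensus. An oblivious algorithm running in $r$ rounds floods for $r$ rounds, then each correct node $v$ outputs a value depending only on $v$ and $\mathrm{view}(v,r,\varphi)$. Consensus: inputs come from a set $I$ with $|I|\ge2$; every correct node outputs a value in $I$, all correct nodes output the same value, and every output equals some node's input. Information flow graph. $\mathsf{IF}(G,r,\Phi)$ is the undirected graph whose vertices are all pairs $(v,\mathrm{view}(v,r,\varphi))$ with $\varphi\in\Phi$ and $v$ correct in $\varphi$ (two such pairs are the same vertex if the node and the view coincide), with an edge between $(v_1,w_1)$ and $(v_2,w_2)$ whenever there exists $\varphi\in\Phi$ with $w_1=\mathrm{view}(v_1,r,\varphi)$ and $w_2=\mathrm{view}(v_2,r,\varphi)$. Domination. A node $v\in V$ dominates a connected component $C$ of $\mathsf{IF}(G,r,\Phi)$ if for every $\varphi\in\Phi$ and every $u\in V$ with $(u,\mathrm{view}(u,r,\varphi))\in C$ we have $(v,x_v)\in\mathrm{view}(u,r,\varphi)$ ($v$ itself need not be correct). *)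

theory Defs
  imports Main
begin

definition simple_connected_graph :: "'v set \<Rightarrow> ('v \<times> 'v) set \<Rightarrow> bool" where
  "simple_connected_graph V E \<longleftrightarrow>
     finite V \<and> E \<subseteq> V \<times> V \<and> sym E \<and> irrefl E \<and>
     (\<forall>u\<in>V. \<forall>v\<in>V. (u, v) \<in> E\<^sup>*)"

definition nbhd :: "('v \<times> 'v) set \<Rightarrow> 'v \<Rightarrow> 'v set" where
  "nbhd E v = {u. (v, u) \<in> E}"

text \<open>A failure pattern assigns to each faulty node v the pair (F_v, f_v);
  correct nodes are mapped to None.\<close>
type_synonym 'v fpattern = "'v \<Rightarrow> ('v set \<times> nat) option"

definition faulty :: "'v fpattern \<Rightarrow> 'v set" where
  "faulty \<phi> = dom \<phi>"

definition correct :: "'v set \<Rightarrow> 'v fpattern \<Rightarrow> 'v \<Rightarrow> bool" where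
  "correct V \<phi> v \<longleftrightarrow> v \<in> V \<and> \<phi> v = None"

definition valid_fpattern :: "'v set \<Rightarrow> ('v \<times> 'v) set \<Rightarrow> nat \<Rightarrow> 'v fpattern \<Rightarrow> bool" where
  "valid_fpattern V E t \<phi> \<longleftrightarrow>
     faulty \<phi> \<subseteq> V \<and> card (faulty \<phi>) \<le> t \<and>
     (\<forall>v Fv fv. \<phi> v = Some (Fv, fv) \<longrightarrow> 1 \<le> fv \<and> Fv \<noteq> {} \<and> Fv \<subseteq> nbhd E v)"

definition Phi_all :: "'v set \<Rightarrow> ('v \<times> 'v) set \<Rightarrow> nat \<Rightarrow> 'v fpattern set" where
  "Phi_all V E t = {\<phi>. valid_fpattern V E t \<phi>}"

text \<open>A causal path is a nonempty list us = [u_1,...,u_q] (0-indexed here: us!i is u_(i+1)).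
  Node us!i sends in round i+1; it must not have crashed in rounds 1..i (i.e. not f \<le> i),
  and if it crashes exactly in round i+1 then us!(i+1) is not in F.\<close>
definition causal_path :: "('v \<times> 'v) set \<Rightarrow> 'v fpattern \<Rightarrow> 'v list \<Rightarrow> bool" where
  "causal_path E \<phi> us \<longleftrightarrow> us \<noteq> [] \<and>
     (\<forall>i. Suc i < length us \<longrightarrow>
        (us ! i, us ! Suc i) \<in> E \<and>
        (case \<phi> (us ! i) of
           None \<Rightarrow> True
         | Some (Fv, fv) \<Rightarrow> \<not> fv \<le> i \<and> (fv = Suc i \<longrightarrow> us ! Suc i \<notin> Fv)))"

text \<open>The view of v after r rounds, identified with the set of nodes whose input it contains.\<close>
definition view :: "('v \<times> 'v) set \<Rightarrow> nat \<Rightarrow> 'v fpattern \<Rightarrow> 'v \<Rightarrow> 'v set" where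
  "view E r \<phi> v = {u. u = v \<or>
     (\<exists>us. causal_path E \<phi> us \<and> hd us = u \<and> last us = v \<and> length us - 1 \<le> r)}"

definition view_pairs :: "('v \<times> 'v) set \<Rightarrow> nat \<Rightarrow> 'v fpattern \<Rightarrow> ('v \<Rightarrow> 'i) \<Rightarrow> 'v \<Rightarrow> ('v \<times> 'i) set" where
  "view_pairs E r \<phi> x v = {(u, x u) | u. u \<in> view E r \<phi> v}"

text \<open>An oblivious algorithm is a decision map dec v (view with inputs).\<close>
definition oblivious_consensus ::
  "'v set \<Rightarrow> ('v \<times> 'v) set \<Rightarrow> nat \<Rightarrow> 'v fpattern set \<Rightarrow> 'i set
     \<Rightarrow> ('v \<Rightarrow> ('v \<times> 'i) set \<Rightarrow> 'i) \<Rightarrow> bool" where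
  "oblivious_consensus V E r \<Phi> I dec \<longleftrightarrow>
     (\<forall>x. (\<forall>u\<in>V. x u \<in> I) \<longrightarrow> (\<forall>\<phi>\<in>\<Phi>.
        (\<forall>v. correct V \<phi> v \<longrightarrow> dec v (view_pairs E r \<phi> x v) \<in> I) \<and>
        (\<forall>v w. correct V \<phi> v \<longrightarrow> correct V \<phi> w \<longrightarrow>
            dec v (view_pairs E r \<phi> x v) = dec w (view_pairs E r \<phi> x w)) \<and>
        (\<forall>v. correct V \<phi> v \<longrightarrow> (\<exists>u\<in>V. dec v (view_pairs E r \<phi> x v) = x u))))"

definition consensus_solvable_oblivious ::
  "'v set \<Rightarrow> ('v \<times> 'v) set \<Rightarrow> nat \<Rightarrow> 'v fpattern set \<Rightarrow> 'i set \<Rightarrow> bool" where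
  "consensus_solvable_oblivious V E r \<Phi> I \<longleftrightarrow> (\<exists>dec. oblivious_consensus V E r \<Phi> I dec)"

definition IF_vertices :: "'v set \<Rightarrow> ('v \<times> 'v) set \<Rightarrow> nat \<Rightarrow> 'v fpattern set \<Rightarrow> ('v \<times> 'v set) set" where
  "IF_vertices V E r \<Phi> = {(v, view E r \<phi> v) | v \<phi>. \<phi> \<in> \<Phi> \<and> correct V \<phi> v}"

definition IF_edges :: "'v set \<Rightarrow> ('v \<times> 'v) set \<Rightarrow> nat \<Rightarrow> 'v fpattern set
     \<Rightarrow> (('v \<times> 'v set) \<times> ('v \<times> 'v set)) set" where
  "IF_edges V E r \<Phi> = {((v1, view E r \<phi> v1), (v2, view E r \<phi> v2)) | v1 v2 \<phi>.
       \<phi> \<in> \<Phi> \<and> correct V \<phi> v1 \<and> correct V \<phi> v2}"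

definition IF_components :: "'v set \<Rightarrow> ('v \<times> 'v) set \<Rightarrow> nat \<Rightarrow> 'v fpattern set
     \<Rightarrow> ('v \<times> 'v set) set set" where
  "IF_components V E r \<Phi> =
     {{b \<in> IF_vertices V E r \<Phi>. (a, b) \<in> (IF_edges V E r \<Phi>)\<^sup>*} | a. a \<in> IF_vertices V E r \<Phi>}"

definition dominates :: "('v \<times> 'v) set \<Rightarrow> nat \<Rightarrow> 'v fpattern set \<Rightarrow> 'v \<Rightarrow> ('v \<times> 'v set) set \<Rightarrow> bool" where
  "dominates E r \<Phi> v C \<longleftrightarrow>
     (\<forall>\<phi>\<in>\<Phi>. \<forall>u. (u, view E r \<phi> u) \<in> C \<longrightarrow> v \<in> view E r \<phi> u)"

end

theory Submission
  imports Defs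
begin

text \<open>An oblivious consensus algorithm decides the same value at the two endpoints of every edge
  of the information flow graph, hence on each whole component. If no node dominates a
  component C, then for every node v some vertex of C does not see the input of v, so changing
  the input of v does not change the decision there, nor anywhere on C. Changing the inputs one
  node at a time turns the all-a assignment into the all-b one without changing the decision
  on C, contradicting validity. Conversely, if every component has a dominating node, deciding
  the input of a chosen dominator of one's own component is an oblivious consensus algorithm:
  the dominator's input is in every view of the component, and the endpoints of an edge lie
  in the same component.\<close>

definition input_pairs :: "('v \<Rightarrow> 'i) \<Rightarrow> 'v set \<Rightarrow> ('v \<times> 'i) set" where
  "input_pairs x S = {(w, x w) | w. w \<in> S}"

lemma view_pairs_eq_input_pairs: "view_pairs E r \<phi> x v = input_pairs x (view E r \<phi> v)"
  by (simp add: view_pairs_def input_pairs_def)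

lemma fst_image_input_pairs [simp]: "fst ` input_pairs x S = S"
  by (force simp: input_pairs_def image_iff)

lemma input_pairs_cong: "(\<And>w. w \<in> S \<Longrightarrow> x w = y w) \<Longrightarrow> input_pairs x S = input_pairs y S"
  unfolding input_pairs_def by auto

lemma input_pairs_unique: "(w, c) \<in> input_pairs x S \<longleftrightarrow> w \<in> S \<and> c = x w"
  unfolding input_pairs_def by auto

definition IF_component :: "'v set \<Rightarrow> ('v \<times> 'v) set \<Rightarrow> nat \<Rightarrow> 'v fpattern set
     \<Rightarrow> 'v \<times> 'v set \<Rightarrow> ('v \<times> 'v set) set" where
  "IF_component V E r \<Phi> p = {q \<in> IF_vertices V E r \<Phi>. (p, q) \<in> (IF_edges V E r \<Phi>)\<^sup>*}"

lemma IF_components_eq: "IF_components V E r \<Phi> = IF_component V E r \<Phi> ` IF_vertices V E r \<Phi>"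
  unfolding IF_components_def IF_component_def by blast

lemma IF_vertex_in_IF_component:
  "p \<in> IF_vertices V E r \<Phi> \<Longrightarrow> p \<in> IF_component V E r \<Phi> p"
  unfolding IF_component_def by simp

lemma IF_edge_sym: "(p, q) \<in> IF_edges V E r \<Phi> \<Longrightarrow> (q, p) \<in> IF_edges V E r \<Phi>"
  unfolding IF_edges_def by blast

lemma IF_component_eq_if_IF_edge:
  assumes "(p, q) \<in> IF_edges V E r \<Phi>"
  shows "IF_component V E r \<Phi> p = IF_component V E r \<Phi> q"
  using assms IF_edge_sym[OF assms] unfolding IF_component_def
  by (auto intro: converse_rtrancl_into_rtrancl)

lemma correct_pair_IF_edge:
  "\<phi> \<in> \<Phi> \<Longrightarrow> correct V \<phi> v \<Longrightarrow> correct V \<phi> w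
    \<Longrightarrow> ((v, view E r \<phi> v), (w, view E r \<phi> w)) \<in> IF_edges V E r \<Phi>"
  unfolding IF_edges_def by blast

definition IF_decision :: "('v \<Rightarrow> ('v \<times> 'i) set \<Rightarrow> 'i) \<Rightarrow> ('v \<Rightarrow> 'i) \<Rightarrow> 'v \<times> 'v set \<Rightarrow> 'i" where
  "IF_decision dec x p = dec (fst p) (input_pairs x (snd p))"

context
  fixes V :: "'v set" and E :: "('v \<times> 'v) set" and r :: nat and \<Phi> :: "'v fpattern set"
    and I :: "'i set" and dec :: "'v \<Rightarrow> ('v \<times> 'i) set \<Rightarrow> 'i" and x :: "'v \<Rightarrow> 'i"
  assumes consensus: "oblivious_consensus V E r \<Phi> I dec"
    and inputs: "\<forall>u\<in>V. x u \<in> I"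
begin

lemma IF_decision_validity:
  assumes "p \<in> IF_vertices V E r \<Phi>"
  shows "\<exists>u\<in>V. IF_decision dec x p = x u"
proof -
  from assms obtain v \<phi> where p_eq: "p = (v, view E r \<phi> v)" and "\<phi> \<in> \<Phi>" "correct V \<phi> v"
    unfolding IF_vertices_def by blast
  with consensus inputs have "\<exists>u\<in>V. dec v (view_pairs E r \<phi> x v) = x u"
    unfolding oblivious_consensus_def by blast
  then show ?thesis
    unfolding p_eq IF_decision_def view_pairs_eq_input_pairs by simp
qed

lemma IF_decision_eq_if_IF_edge:
  assumes "(p, q) \<in> IF_edges V E r \<Phi>"
  shows "IF_decision dec x p = IF_decision dec x q"
proof -
  from assms obtain v w \<phi> where p_eq: "p = (v, view E r \<phi> v)" and q_eq: "q = (w, view E r \<phi> w)"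
    and "\<phi> \<in> \<Phi>" "correct V \<phi> v" "correct V \<phi> w"
    unfolding IF_edges_def by blast
  with consensus inputs have "dec v (view_pairs E r \<phi> x v) = dec w (view_pairs E r \<phi> x w)"
    unfolding oblivious_consensus_def by blast
  then show ?thesis
    unfolding p_eq q_eq IF_decision_def view_pairs_eq_input_pairs by simp
qed

lemma IF_decision_eq_in_IF_component:
  assumes "q \<in> IF_component V E r \<Phi> p"
  shows "IF_decision dec x q = IF_decision dec x p"
proof -
  from assms have "(p, q) \<in> (IF_edges V E r \<Phi>)\<^sup>*"
    unfolding IF_component_def by simp
  then show ?thesis
    by induction (use IF_decision_eq_if_IF_edge in auto)
qed

end

lemma IF_decision_fun_upd_undominated:
  assumes consensus: "oblivious_consensus V E r \<Phi> I dec"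
    and inputs: "\<forall>u\<in>V. x u \<in> I" and "c \<in> I"
    and p: "p \<in> IF_vertices V E r \<Phi>" and q: "q \<in> IF_component V E r \<Phi> p"
    and not_dominating: "\<not> dominates E r \<Phi> v (IF_component V E r \<Phi> p)"
  shows "IF_decision dec (x(v := c)) q = IF_decision dec x q"
proof -
  have inputs': "\<forall>u\<in>V. (x(v := c)) u \<in> I"
    using inputs \<open>c \<in> I\<close> by simp
  from not_dominating obtain \<phi> u where blind: "(u, view E r \<phi> u) \<in> IF_component V E r \<Phi> p"
    and v_unseen: "v \<notin> view E r \<phi> u"
    unfolding dominates_def by blast
  have "IF_decision dec (x(v := c)) q = IF_decision dec (x(v := c)) (u, view E r \<phi> u)"
    using IF_decision_eq_in_IF_component[OF consensus inputs' q]
      IF_decision_eq_in_IF_component[OF consensus inputs' blind] by (rule trans[OF _ sym])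
  also have "\<dots> = IF_decision dec x (u, view E r \<phi> u)"
  proof -
    have "input_pairs (x(v := c)) (view E r \<phi> u) = input_pairs x (view E r \<phi> u)"
      by (rule input_pairs_cong) (use v_unseen in auto)
    then show ?thesis
      unfolding IF_decision_def by simp
  qed
  also have "\<dots> = IF_decision dec x q"
    using IF_decision_eq_in_IF_component[OF consensus inputs blind]
      IF_decision_eq_in_IF_component[OF consensus inputs q] by (rule trans[OF _ sym])
  finally show ?thesis .
qed

lemma IF_decision_override_on_undominated:
  assumes consensus: "oblivious_consensus V E r \<Phi> I dec"
    and inputs: "\<forall>u\<in>V. x u \<in> I" "\<forall>u\<in>V. y u \<in> I"
    and p: "p \<in> IF_vertices V E r \<Phi>" and q: "q \<in> IF_component V E r \<Phi> p"
    and undominated: "\<forall>v\<in>V. \<not> dominates E r \<Phi> v (IF_component V E r \<Phi> p)"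
    and "finite A" "A \<subseteq> V"
  shows "IF_decision dec (override_on x y A) q = IF_decision dec x q"
  using \<open>finite A\<close> \<open>A \<subseteq> V\<close>
proof (induction A rule: finite_induct)
  case empty
  show ?case by simp
next
  case (insert v A)
  then have "v \<in> V" "A \<subseteq> V"
    by simp_all
  have "\<forall>u\<in>V. override_on x y A u \<in> I"
    using inputs by (simp add: override_on_def)
  from IF_decision_fun_upd_undominated[OF consensus this _ p q, of "y v" v]
  have "IF_decision dec (override_on x y (insert v A)) q = IF_decision dec (override_on x y A) q"
    unfolding override_on_insert using inputs(2) undominated \<open>v \<in> V\<close> by blast
  also have "\<dots> = IF_decision dec x q"
    using insert.IH \<open>A \<subseteq> V\<close> .
  finally show ?case .

qed

lemma dominated_if_oblivious_consensus:
  assumes "finite V" and "a \<in> I" "b \<in> I" "a \<noteq> b"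
    and consensus: "oblivious_consensus V E r \<Phi> I dec"
    and C: "C \<in> IF_components V E r \<Phi>"
  shows "\<exists>v\<in>V. dominates E r \<Phi> v C"
proof (rule ccontr)
  assume undominated: "\<not> ?thesis"
  from C obtain p where p: "p \<in> IF_vertices V E r \<Phi>" and C_eq: "C = IF_component V E r \<Phi> p"
    unfolding IF_components_eq by blast
  let ?x = "\<lambda>_. a" and ?y = "\<lambda>_. b"
  have inputs: "\<forall>u\<in>V. ?x u \<in> I" "\<forall>u\<in>V. ?y u \<in> I"
    using \<open>a \<in> I\<close> \<open>b \<in> I\<close> by auto
  then have inputs_override: "\<forall>u\<in>V. override_on ?x ?y V u \<in> I"
    by simp
  have "\<forall>v\<in>V. \<not> dominates E r \<Phi> v (IF_component V E r \<Phi> p)"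
    using undominated C_eq by simp
  then have "IF_decision dec (override_on ?x ?y V) p = IF_decision dec ?x p"
    using IF_decision_override_on_undominated[OF consensus inputs p
        IF_vertex_in_IF_component[OF p] _ \<open>finite V\<close> subset_refl] by blast
  moreover have "IF_decision dec ?x p = a"
    using IF_decision_validity[OF consensus inputs(1) p] by auto
  moreover have "IF_decision dec (override_on ?x ?y V) p = b"
    using IF_decision_validity[OF consensus inputs_override p] by auto
  ultimately show False
    using \<open>a \<noteq> b\<close> by simp
qed

definition IF_dominator :: "'v set \<Rightarrow> ('v \<times> 'v) set \<Rightarrow> nat \<Rightarrow> 'v fpattern set
     \<Rightarrow> 'v \<times> 'v set \<Rightarrow> 'v" where
  "IF_dominator V E r \<Phi> p = (SOME d. d \<in> V \<and> dominates E r \<Phi> d (IF_component V E r \<Phi> p))"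

text \<open>The first projection of the received pairs is the view itself, so a node can locate its
  own vertex of the information flow graph.\<close>
definition decide_dominator :: "'v set \<Rightarrow> ('v \<times> 'v) set \<Rightarrow> nat \<Rightarrow> 'v fpattern set
     \<Rightarrow> 'v \<Rightarrow> ('v \<times> 'i) set \<Rightarrow> 'i" where
  "decide_dominator V E r \<Phi> v W = (SOME c. (IF_dominator V E r \<Phi> (v, fst ` W), c) \<in> W)"

lemma decide_dominator_view_pairs:
  assumes dominated: "\<forall>C\<in>IF_components V E r \<Phi>. \<exists>v\<in>V. dominates E r \<Phi> v C"
    and "\<phi> \<in> \<Phi>" "correct V \<phi> v"
  shows "IF_dominator V E r \<Phi> (v, view E r \<phi> v) \<in> V"
    and "decide_dominator V E r \<Phi> v (view_pairs E r \<phi> x v)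
           = x (IF_dominator V E r \<Phi> (v, view E r \<phi> v))"
proof -
  let ?p = "(v, view E r \<phi> v)"
  let ?d = "IF_dominator V E r \<Phi> ?p"
  have p: "?p \<in> IF_vertices V E r \<Phi>"
    using assms(2,3) unfolding IF_vertices_def by blast
  then have "\<exists>d. d \<in> V \<and> dominates E r \<Phi> d (IF_component V E r \<Phi> ?p)"
    using dominated unfolding IF_components_eq by blast
  then have d: "?d \<in> V \<and> dominates E r \<Phi> ?d (IF_component V E r \<Phi> ?p)"
    unfolding IF_dominator_def by (rule someI_ex)
  then show "?d \<in> V" ..
  have "?d \<in> view E r \<phi> v"
    using d IF_vertex_in_IF_component[OF p] \<open>\<phi> \<in> \<Phi>\<close> unfolding dominates_def by blast
  then show "decide_dominator V E r \<Phi> v (view_pairs E r \<phi> x v) = x ?d"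
    unfolding decide_dominator_def view_pairs_eq_input_pairs fst_image_input_pairs
    by (simp add: input_pairs_unique)
qed

lemma oblivious_consensus_if_dominated:
  assumes dominated: "\<forall>C\<in>IF_components V E r \<Phi>. \<exists>v\<in>V. dominates E r \<Phi> v C"
  shows "oblivious_consensus V E r \<Phi> I (decide_dominator V E r \<Phi>)"
  unfolding oblivious_consensus_def
proof (intro allI impI ballI conjI)
  fix x \<phi> v w
  assume inputs: "\<forall>u\<in>V. x u \<in> I" and "\<phi> \<in> \<Phi>"
  note decision = decide_dominator_view_pairs[OF dominated \<open>\<phi> \<in> \<Phi>\<close>]
  show "decide_dominator V E r \<Phi> v (view_pairs E r \<phi> x v) \<in> I"
    and "\<exists>u\<in>V. decide_dominator V E r \<Phi> v (view_pairs E r \<phi> x v) = x u"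
    if "correct V \<phi> v"
    using decision(1)[OF that] decision(2)[OF that, of x] inputs by auto
  assume "correct V \<phi> v" "correct V \<phi> w"
  then have "IF_component V E r \<Phi> (v, view E r \<phi> v) = IF_component V E r \<Phi> (w, view E r \<phi> w)"
    by (intro IF_component_eq_if_IF_edge correct_pair_IF_edge \<open>\<phi> \<in> \<Phi>\<close>)
  then show "decide_dominator V E r \<Phi> v (view_pairs E r \<phi> x v)
           = decide_dominator V E r \<Phi> w (view_pairs E r \<phi> x w)"
    using decision(2)[OF \<open>correct V \<phi> v\<close>, of x] decision(2)[OF \<open>correct V \<phi> w\<close>, of x]
    unfolding IF_dominator_def by simp
qed

theorem theorem3:
  fixes V :: "'v set" and E :: "('v \<times> 'v) set" and t r :: nat
    and \<Phi> :: "'v fpattern set" and I :: "'i set"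
  assumes "simple_connected_graph V E"
    and "\<Phi> \<subseteq> Phi_all V E t"
    and "\<exists>a\<in>I. \<exists>b\<in>I. a \<noteq> b"
  shows "consensus_solvable_oblivious V E r \<Phi> I \<longleftrightarrow>
         (\<forall>C\<in>IF_components V E r \<Phi>. \<exists>v\<in>V. dominates E r \<Phi> v C)"
proof
  assume "consensus_solvable_oblivious V E r \<Phi> I"
  then obtain dec where consensus: "oblivious_consensus V E r \<Phi> I dec"
    unfolding consensus_solvable_oblivious_def by blast
  have "finite V"
    using assms(1) unfolding simple_connected_graph_def by blast
  from assms(3) obtain a b where "a \<in> I" "b \<in> I" "a \<noteq> b" by blast
  show "\<forall>C\<in>IF_components V E r \<Phi>. \<exists>v\<in>V. dominates E r \<Phi> v C"
    using dominated_if_oblivious_consensus[OF \<open>finite V\<close> \<open>a \<in> I\<close> \<open>b \<in> I\<close> \<open>a \<noteq> b\<close> consensus]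
    by blast
next
  assume "\<forall>C\<in>IF_components V E r \<Phi>. \<exists>v\<in>V. dominates E r \<Phi> v C"
  then show "consensus_solvable_oblivious V E r \<Phi> I"
    unfolding consensus_solvable_oblivious_def by (blast intro: oblivious_consensus_if_dominated)
qed

end
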